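(* For every $\gamma>0$, $2\arctan\gamma<\min\{\eta^{-1}(\gamma),\pi\}$.
   Context: Let $\psi(\theta)=\frac{\theta-\sin\theta}{1-\cos\theta}$ and $A(\theta)=\frac{\theta\cos\frac\theta2-2\sin\frac\theta2}{\theta-\sin\theta}$ for $0<\theta<2\pi$. The function $\eta(\theta)=\psi(\theta)(1-A(\theta))$ is a strictly increasing bijection of $(0,2\pi)$ onto $(0,\infty)$, and $\eta^{-1}$ denotes its inverse. *)

theory Defs
  imports "HOL-Analysis.Analysis"
begin

definition psi :: "real \<Rightarrow> real" where
  "psi \<theta> = (\<theta> - sin \<theta>) / (1 - cos \<theta>)"

definition A :: "real \<Rightarrow> real" where
  "A \<theta> = (\<theta> * cos (\<theta>/2) - 2 * sin (\<theta>/2)) / (\<theta> - sin \<theta>)"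

definition eta :: "real \<Rightarrow> real" where
  "eta \<theta> = psi \<theta> * (1 - A \<theta>)"

text \<open>Inverse of eta, viewed as a bijection of (0, 2 pi) onto (0, infinity).\<close>
definition eta_inv :: "real \<Rightarrow> real" where
  "eta_inv \<gamma> = (THE \<theta>. \<theta> \<in> {0<..<2*pi} \<and> eta \<theta> = \<gamma>)"

end

theory Submission
  imports Defs "HOL-Real_Asymp.Real_Asymp"
begin

text \<open>In the half angle \<open>t = \<theta>/2\<close> the function \<open>\<eta>\<close> simplifies to
  \<open>(t + sin t) / (1 + cos t)\<close>, which increases strictly from \<open>0\<close> to \<open>\<infinity>\<close> on \<open>(0, \<pi>)\<close>.
  At \<open>t = arctan \<gamma>\<close> we have \<open>sin t = \<gamma> cos t\<close> and \<open>t < \<gamma>\<close>, so the value there is below \<open>\<gamma>\<close>;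
  hence the solution of \<open>\<eta>(2t) = \<gamma>\<close> lies strictly between \<open>arctan \<gamma>\<close> and \<open>\<pi>\<close>.\<close>

definition eta_half :: "real \<Rightarrow> real" where
  "eta_half t = (t + sin t) / (1 + cos t)"

lemma eta_eq_eta_half:
  assumes "0 < \<theta>" "\<theta> < 2 * pi"
  shows "eta \<theta> = eta_half (\<theta> / 2)"
proof -
  define t where "t = \<theta> / 2"
  have \<theta>: "\<theta> = 2 * t" and t: "0 < t" "t < pi"
    using assms by (auto simp: t_def)
  have sin_t: "sin t > 0" using t sin_gt_zero by auto
  have cos_t: "-1 < cos t" "cos t < 1"
    using t cos_mono_less_eq[of pi t] cos_mono_less_eq[of t 0] by auto
  have sin_\<theta>: "sin \<theta> = 2 * sin t * cos t" and one_minus_cos_\<theta>: "1 - cos \<theta> = 2 * (sin t)\<^sup>2"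
    by (simp_all add: \<theta> sin_double cos_double_sin)
  have "sin t * cos t < t" using sin_x_le_x[of t] t sin_t cos_t
    by (smt (verit) mult_less_cancel_left2)
  then have "\<theta> - sin \<theta> \<noteq> 0" using \<theta> sin_\<theta> by linarith
  moreover have cancel: "P / Q * (1 - X / P) = (P - X) / Q" if "P \<noteq> 0" for P Q X :: real
    using that by (cases "Q = 0") (simp_all add: field_simps)
  ultimately have "eta \<theta> = ((\<theta> - sin \<theta>) - (\<theta> * cos t - 2 * sin t)) / (1 - cos \<theta>)"
    unfolding eta_def psi_def A_def t_def[symmetric] by blast
  also have "\<dots> = 2 * (1 - cos t) * (t + sin t) / (2 * (1 - cos t) * (1 + cos t))"
  proof -
    have "(\<theta> - sin \<theta>) - (\<theta> * cos t - 2 * sin t) = 2 * (1 - cos t) * (t + sin t)"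
      unfolding sin_\<theta> by (simp add: \<theta> algebra_simps)
    moreover have "1 - cos \<theta> = 2 * (1 - cos t) * (1 + cos t)"
      unfolding one_minus_cos_\<theta> sin_squared_eq by (simp add: algebra_simps power2_eq_square)
    ultimately show ?thesis by simp
  qed
  also have "\<dots> = eta_half t"
    using cos_t by (simp add: eta_half_def)
  finally show ?thesis by (simp add: t_def)
qed

lemma eta_half_strict_mono: "strict_mono_on {0<..<pi} eta_half"
proof (rule strict_mono_onI)
  fix a b assume "a \<in> {0<..<pi}" "b \<in> {0<..<pi}" "a < b"
  then have ab: "0 < a" "a < b" "b < pi" by auto
  have "\<exists>z>a. z < b \<and> (b + sin b) - (a + sin a) = (b - a) * (1 + cos z)"
    by (rule MVT2) (auto intro!: derivative_eq_intros ab)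
  then have num: "a + sin a \<le> b + sin b"
    using ab cos_ge_minus_one by (smt (verit) mult_nonneg_nonneg)
  have "b + sin b > 0" using sin_gt_zero[of b] ab by auto
  moreover have "-1 < cos b" "cos b < cos a"
    using cos_mono_less_eq[of pi b] cos_mono_less_eq[of b a] ab by auto
  ultimately have "eta_half a \<le> (b + sin b) / (1 + cos a)"
    and "(b + sin b) / (1 + cos a) < eta_half b"
    using num unfolding eta_half_def
    by (auto intro: divide_right_mono divide_strict_left_mono)
  then show "eta_half a < eta_half b" by linarith
qed

lemma continuous_on_eta_half: "continuous_on {0<..<pi} eta_half"
proof -
  have "1 + cos t \<noteq> 0" if "t \<in> {0<..<pi}" for t
    using that cos_mono_less_eq[of pi t] by auto
  then show ?thesis unfolding eta_half_def by (intro continuous_intros) auto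
qed

lemma eta_half_tendsto_at_left_pi: "filterlim eta_half at_top (at_left pi)"
  unfolding eta_half_def by real_asymp

lemma eta_inv_eta:
  assumes "\<theta> \<in> {0<..<2 * pi}"
  shows "eta_inv (eta \<theta>) = \<theta>"
proof -
  have "inj_on eta_half {0<..<pi}"
    using eta_half_strict_mono by (rule strict_mono_on_imp_inj_on)
  have "inj_on eta {0<..<2 * pi}"
  proof (rule inj_onI)
    fix x y assume "x \<in> {0<..<2 * pi}" "y \<in> {0<..<2 * pi}" "eta x = eta y"
    with \<open>inj_on eta_half {0<..<pi}\<close> have "x / 2 = y / 2"
      by (auto simp: eta_eq_eta_half dest: inj_onD[of _ _ "x / 2" "y / 2"])
    then show "x = y" by simp
  qed
  with assms show ?thesis
    unfolding eta_inv_def by (intro the_equality) (auto dest: inj_onD)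
qed

lemma arctan_less_self:
  assumes "0 < x"
  shows "arctan x < x"
proof -
  have "\<exists>z>0. z < x \<and> arctan x - arctan 0 = (x - 0) * inverse (1 + z\<^sup>2)"
    by (rule MVT2) (auto intro!: assms DERIV_arctan)
  then obtain z where "z > 0" "arctan x = x * inverse (1 + z\<^sup>2)" by auto
  with assms show ?thesis by (simp add: inverse_less_1_iff)
qed

lemma eta_half_arctan_less:
  assumes "0 < \<gamma>"
  shows "eta_half (arctan \<gamma>) < \<gamma>"
proof -
  define t where "t = arctan \<gamma>"
  have "0 < t" "t < pi / 2" using assms arctan_ubound by (auto simp: t_def)
  then have cos_t: "cos t > 0" using cos_gt_zero by auto
  have "sin t = \<gamma> * cos t"
    using tan_arctan[of \<gamma>] cos_t by (simp add: t_def tan_def field_simps)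
  moreover have "t < \<gamma>" using arctan_less_self assms by (simp add: t_def)
  ultimately have "t + sin t < \<gamma> * (1 + cos t)" by (simp add: algebra_simps)
  with cos_t show ?thesis
    by (simp add: eta_half_def t_def[symmetric] divide_less_eq add_pos_pos)
qed

lemma eta_half_eq_between_arctan_and_pi:
  assumes "0 < \<gamma>"
  obtains t where "arctan \<gamma> < t" "t < pi" "eta_half t = \<gamma>"
proof -
  have "\<forall>\<^sub>F t in at_left pi. \<gamma> < eta_half t"
    using eta_half_tendsto_at_left_pi filterlim_at_top_dense by blast
  moreover have "\<forall>\<^sub>F t in at_left pi. t \<in> {arctan \<gamma><..<pi}"
    using arctan_ubound[of \<gamma>] pi_gt_zero by (intro eventually_at_left_real) linarith
  ultimately have "\<forall>\<^sub>F t in at_left pi. \<gamma> < eta_half t \<and> t \<in> {arctan \<gamma><..<pi}"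
    by (rule eventually_conj)
  then obtain b where b: "\<gamma> < eta_half b" "arctan \<gamma> < b" "b < pi"
    using eventually_happens'[OF trivial_limit_at_left_real] by auto
  have "0 < arctan \<gamma>" using assms by simp
  with b have "{arctan \<gamma>..b} \<subseteq> {0<..<pi}"
    by (auto simp del: zero_less_arctan_iff)
  then have "continuous_on {arctan \<gamma>..b} eta_half"
    by (rule continuous_on_subset[OF continuous_on_eta_half])
  then obtain t where "arctan \<gamma> \<le> t" "t \<le> b" "eta_half t = \<gamma>"
    using IVT'[of eta_half "arctan \<gamma>" \<gamma> b] eta_half_arctan_less[OF assms] b by auto
  with b eta_half_arctan_less[OF assms] show ?thesis
    by (intro that) (auto simp: order.order_iff_strict)
qed

theorem lemma4p2:
  fixes \<gamma> :: real
  assumes "\<gamma> > 0"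
  shows "2 * arctan \<gamma> < min (eta_inv \<gamma>) pi"
proof -
  obtain t where t: "arctan \<gamma> < t" "t < pi" "eta_half t = \<gamma>"
    using eta_half_eq_between_arctan_and_pi assms by blast
  have "0 < t" using t assms by (smt (verit) zero_less_arctan_iff)
  then have "eta_inv \<gamma> = 2 * t"
    using t eta_inv_eta[of "2 * t"] eta_eq_eta_half[of "2 * t"] by auto
  with t arctan_ubound[of \<gamma>] show ?thesis by simp
qed

end
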